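(* Let $\mathcal{H}_A$ and $\mathcal{H}_B$ be $d$-dimensional Hilbert spaces. Let $\{\ket{k}\}_{k=1}^d$ be an orthonormal basis of each space, and fix a unit vector $\ket{b}\in\mathcal{H}_B$. Let $U$ be a unitary on $\mathcal{H}_A\otimes\mathcal{H}_B$ with $U(\ket{k}\otimes\ket{b})=\ket{k}\otimes\ket{k}$ for all $k$. Then $(U,\ket{b})$ masks the family of states $$\ket{a_\phi}=\tfrac{1}{\sqrt d}\sum_{k=1}^d e^{i\phi_k}\ket{k},\qquad \phi=(\phi_1,\dots,\phi_d)\in[-\pi,\pi]^d.$$ That is, for every such $\ket{a_\phi}$, both marginals of $U(\ket{a_\phi}\otimes\ket{b})$ equal the same state $I/d$, independent of $\phi$. More generally, for every density operator $\sigma$ on $\mathcal{H}_A$ that is a convex combination of the projectors $\ket{a_\phi}\bra{a_\phi}$, both marginals of $U(\sigma\otimes\ket{b}\bra{b})U^\dagger$ equal $I/d$.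
   Context: A masker for a set of states on $\mathcal{H}_A$ is a unitary $U$ on $\mathcal{H}_A\otimes\mathcal{H}_B$ together with a fixed ancilla state $\ket{b}\in\mathcal{H}_B$. It masks the set if, for every state in the set, the reduced states on $A$ and on $B$ of the output $U(\cdot\otimes\ket{b})$ do not depend on which state of the set was input. The convex hull of the states $\ket{a_\phi}$ is called the great hyper-disk. A unitary with the stated action exists, since the vectors $\ket{k}\otimes\ket{k}$ are orthonormal. *)

theory Defs
  imports "HOL-Analysis.Analysis"
begin

text \<open>Finite-dimensional Hilbert spaces are modelled as \<open>complex ^ 'n\<close> with
  \<open>d = CARD('n)\<close>; operators as \<open>complex ^ 'n ^ 'n\<close> matrices; the bipartite space
  \<open>H_A \<otimes> H_B\<close> as \<open>complex ^ ('a \<times> 'b)\<close>.\<close>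

definition cinner :: "complex ^ 'n \<Rightarrow> complex ^ 'n \<Rightarrow> complex" where
  "cinner u v = (\<Sum>i\<in>UNIV. cnj (u $ i) * v $ i)"

definition orthonormal_basis :: "('n::finite \<Rightarrow> complex ^ 'n) \<Rightarrow> bool" where
  "orthonormal_basis e \<longleftrightarrow> (\<forall>k l. cinner (e k) (e l) = (if k = l then 1 else 0))"

definition outer :: "complex ^ 'n \<Rightarrow> complex ^ 'n \<Rightarrow> complex ^ 'n ^ 'n" where
  "outer u v = (\<chi> i j. u $ i * cnj (v $ j))"

definition mat_adjoint :: "complex ^ 'n ^ 'm \<Rightarrow> complex ^ 'm ^ 'n" where
  "mat_adjoint U = (\<chi> i j. cnj (U $ j $ i))"

definition unitary_mat :: "complex ^ 'n ^ 'n \<Rightarrow> bool" where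
  "unitary_mat U \<longleftrightarrow> U ** mat_adjoint U = mat 1 \<and> mat_adjoint U ** U = mat 1"

definition tensor_vec :: "complex ^ 'a \<Rightarrow> complex ^ 'b \<Rightarrow> complex ^ ('a \<times> 'b)" where
  "tensor_vec u v = (\<chi> p. u $ fst p * v $ snd p)"

definition tensor_mat :: "complex ^ 'a ^ 'a \<Rightarrow> complex ^ 'b ^ 'b \<Rightarrow> complex ^ ('a \<times> 'b) ^ ('a \<times> 'b)" where
  "tensor_mat A B = (\<chi> p q. A $ fst p $ fst q * B $ snd p $ snd q)"

definition ptrace_B :: "complex ^ ('a \<times> 'b::finite) ^ ('a \<times> 'b) \<Rightarrow> complex ^ 'a ^ 'a" where
  "ptrace_B \<rho> = (\<chi> i i'. \<Sum>j\<in>UNIV. \<rho> $ (i, j) $ (i', j))"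

definition ptrace_A :: "complex ^ ('a::finite \<times> 'b) ^ ('a \<times> 'b) \<Rightarrow> complex ^ 'b ^ 'b" where
  "ptrace_A \<rho> = (\<chi> j j'. \<Sum>i\<in>UNIV. \<rho> $ (i, j) $ (i, j'))"

definition a_state :: "('n::finite \<Rightarrow> complex ^ 'n) \<Rightarrow> ('n \<Rightarrow> real) \<Rightarrow> complex ^ 'n" where
  "a_state e \<phi> = (\<chi> i. (\<Sum>k\<in>UNIV. exp (\<i> * complex_of_real (\<phi> k)) * e k $ i)
                        / complex_of_real (sqrt (real CARD('n))))"

definition max_mixed :: "complex ^ 'n ^ 'n" where
  "max_mixed = (1 / real CARD('n)) *\<^sub>R mat 1"

end

theory Submission
  imports Defs
begin

text \<open>By linearity \<open>U (|a_\<phi>\<rangle> \<otimes> |b\<rangle>) = d^{-1/2} \<Sum>_k e^{i \<phi>_k} |k\<rangle> \<otimes> |k\<rangle>\<close>,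
  a Schmidt decomposition whose coefficients all have modulus \<open>d^{-1/2}\<close>. The reduced state of
  \<open>\<Sum>_k c_k |e_k\<rangle> \<otimes> |f_k\<rangle>\<close> on either side is \<open>\<Sum>_k |c_k|^2 |e_k\<rangle>\<langle>e_k|\<close> (resp. with \<open>f_k\<close>),
  which here is \<open>I/d\<close> by completeness of the basis. For mixtures, the map
  \<open>\<sigma> \<mapsto> tr_B (U (\<sigma> \<otimes> |b\<rangle>\<langle>b|) U^\<dagger>)\<close> is linear and constant on the generators of the
  convex hull, hence constant on the hull.\<close>

lemma orthonormal_basis_sum_conj:
  assumes "orthonormal_basis e"
  shows "(\<Sum>j\<in>UNIV. e k $ j * cnj (e l $ j)) = (if k = l then 1 else 0)"
  using assms unfolding orthonormal_basis_def cinner_def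
  by (metis (no_types, lifting) mult.commute sum.cong)

text \<open>Completeness: an orthonormal family of \<open>d\<close> vectors in a \<open>d\<close>-dimensional space has
  \<open>\<Sum>_k |e_k\<rangle>\<langle>e_k| = I\<close>, because a one-sided inverse of a square matrix is two-sided.\<close>

lemma orthonormal_basis_completeness:
  fixes e :: "'n::finite \<Rightarrow> complex ^ 'n"
  assumes "orthonormal_basis e"
  shows "(\<Sum>k\<in>UNIV. e k $ i * cnj (e k $ i')) = (if i = i' then 1 else 0)"
proof -
  let ?E_adj = "(\<chi> k i. cnj (e k $ i)) :: complex ^ 'n ^ 'n"
  let ?E = "(\<chi> i k. e k $ i) :: complex ^ 'n ^ 'n"
  have "?E_adj ** ?E = mat 1"
    using assms unfolding orthonormal_basis_def cinner_def
    by (simp add: vec_eq_iff matrix_matrix_mult_def mat_def)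
  then have "?E ** ?E_adj = mat 1"
    by (rule matrix_left_right_inverse1)
  then have "(?E ** ?E_adj) $ i $ i' = mat 1 $ i $ i'"
    by simp
  then show ?thesis
    by (simp add: matrix_matrix_mult_def mat_def)
qed

lemma max_mixed_component:
  "(max_mixed :: complex ^ 'n ^ 'n) $ i $ i' = (if i = i' then 1 / of_nat CARD('n::finite) else 0)"
  by (simp add: max_mixed_def mat_def scaleR_conv_of_real[where 'a=complex])

lemma unimodular_over_sqrt_mult_cnj:
  "(exp (\<i> * complex_of_real t) / complex_of_real (sqrt (real n))) *
     cnj (exp (\<i> * complex_of_real t) / complex_of_real (sqrt (real n))) = 1 / of_nat n"
  by (simp add: exp_cnj exp_minus field_simps flip: of_real_mult)

lemma matrix_vector_mult_sum_scale:
  fixes U :: "complex ^ 'm ^ 'm"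
  shows "U *v (\<Sum>k\<in>S. c k *s x k) = (\<Sum>k\<in>S. c k *s (U *v x k))"
  by (simp add: vec_eq_iff matrix_vector_mult_def sum_component sum_distrib_left mult_ac
      sum.swap[of _ S])

lemma tensor_vec_sum_scale:
  "tensor_vec (\<Sum>k\<in>S. c k *s x k) b = (\<Sum>k\<in>S. c k *s tensor_vec (x k) b)"
  by (simp add: vec_eq_iff tensor_vec_def sum_component sum_distrib_left mult_ac)

lemma a_state_eq_sum:
  fixes e :: "'n::finite \<Rightarrow> complex ^ 'n"
  shows "a_state e \<phi> =
    (\<Sum>k\<in>UNIV. (exp (\<i> * complex_of_real (\<phi> k)) / complex_of_real (sqrt (real CARD('n)))) *s e k)"
  by (simp add: vec_eq_iff a_state_def sum_component sum_divide_distrib)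

lemma conj_outer:
  fixes U :: "complex ^ 'm ^ 'm"
  shows "U ** outer v w ** mat_adjoint U = outer (U *v v) (U *v w)"
  by (simp add: vec_eq_iff matrix_matrix_mult_def matrix_vector_mult_def outer_def mat_adjoint_def
      sum_distrib_left sum_distrib_right mult_ac)

lemma tensor_mat_outer:
  "tensor_mat (outer a a') (outer b b') = outer (tensor_vec a b) (tensor_vec a' b')"
  by (simp add: vec_eq_iff tensor_mat_def outer_def tensor_vec_def mult_ac)

definition swap_vec :: "complex ^ ('a::finite \<times> 'b::finite) \<Rightarrow> complex ^ ('b \<times> 'a)" where
  "swap_vec \<psi> = (\<chi> p. \<psi> $ prod.swap p)"

lemma ptrace_A_outer_swap:
  "ptrace_A (outer \<psi> \<psi>') = ptrace_B (outer (swap_vec \<psi>) (swap_vec \<psi>'))"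
  by (simp add: vec_eq_iff ptrace_A_def ptrace_B_def outer_def swap_vec_def)

lemma swap_vec_schmidt:
  "swap_vec (\<Sum>k\<in>S. c k *s tensor_vec (u k) (v k)) = (\<Sum>k\<in>S. c k *s tensor_vec (v k) (u k))"
  by (simp add: vec_eq_iff swap_vec_def tensor_vec_def sum_component mult_ac)

lemma ptrace_B_outer_schmidt:
  fixes eB :: "'b::finite \<Rightarrow> complex ^ 'b" and eA :: "'b \<Rightarrow> complex ^ 'a::finite"
  assumes "orthonormal_basis eB"
    and "\<psi> = (\<Sum>k\<in>UNIV. c k *s tensor_vec (eA k) (eB k))"
  shows "ptrace_B (outer \<psi> \<psi>) $ i $ i' = (\<Sum>k\<in>UNIV. c k * cnj (c k) * (eA k $ i * cnj (eA k $ i')))"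
proof -
  have "ptrace_B (outer \<psi> \<psi>) $ i $ i' =
      (\<Sum>j\<in>UNIV. \<Sum>k\<in>UNIV. \<Sum>l\<in>UNIV.
         c k * cnj (c l) * eA k $ i * cnj (eA l $ i') * (eB k $ j * cnj (eB l $ j)))"
    by (simp add: assms(2) ptrace_B_def outer_def tensor_vec_def sum_component sum_product mult_ac)
  also have "\<dots> = (\<Sum>k\<in>UNIV. \<Sum>l\<in>UNIV. \<Sum>j\<in>UNIV.
         c k * cnj (c l) * eA k $ i * cnj (eA l $ i') * (eB k $ j * cnj (eB l $ j)))"
    by (rule trans[OF sum.swap], rule sum.cong[OF refl], rule sum.swap)
  also have "\<dots> = (\<Sum>k\<in>UNIV. \<Sum>l\<in>UNIV.
         c k * cnj (c l) * eA k $ i * cnj (eA l $ i') * (\<Sum>j\<in>UNIV. eB k $ j * cnj (eB l $ j)))"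
    by (simp add: sum_distrib_left)
  also have "\<dots> = (\<Sum>k\<in>UNIV. c k * cnj (c k) * (eA k $ i * cnj (eA k $ i')))"
    by (simp add: orthonormal_basis_sum_conj[OF assms(1)] if_distrib[of "\<lambda>x. _ * x"] mult_ac
        cong: if_cong)
  finally show ?thesis .
qed

lemma schmidt_uniform_marginals:
  fixes eA eB :: "'n::finite \<Rightarrow> complex ^ 'n"
  assumes onbA: "orthonormal_basis eA" and onbB: "orthonormal_basis eB"
    and uniform: "\<And>k. c k * cnj (c k) = 1 / of_nat CARD('n)"
    and \<psi>: "\<psi> = (\<Sum>k\<in>UNIV. c k *s tensor_vec (eA k) (eB k))"
  shows "ptrace_B (outer \<psi> \<psi>) = max_mixed \<and> ptrace_A (outer \<psi> \<psi>) = max_mixed"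
proof -
  have marginal: "ptrace_B (outer \<xi> \<xi>) = max_mixed"
    if "orthonormal_basis e" "orthonormal_basis f"
      "\<xi> = (\<Sum>k\<in>UNIV. c k *s tensor_vec (e k) (f k))"
    for e f :: "'n \<Rightarrow> complex ^ 'n" and \<xi>
    using ptrace_B_outer_schmidt[OF that(2,3)]
    by (simp add: vec_eq_iff uniform orthonormal_basis_completeness[OF that(1)] max_mixed_component
        flip: sum_divide_distrib)
  show ?thesis
    using marginal[OF onbA onbB \<psi>] marginal[OF onbB onbA swap_vec_schmidt]
    by (simp add: ptrace_A_outer_swap \<psi>)
qed

lemma linear_ptrace_B: "linear ptrace_B"
  by (rule linearI) (simp_all add: vec_eq_iff ptrace_B_def sum.distrib scaleR_sum_right)

lemma linear_ptrace_A: "linear ptrace_A"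
  by (rule linearI) (simp_all add: vec_eq_iff ptrace_A_def sum.distrib scaleR_sum_right)

lemma linear_conj_tensor_mat:
  fixes U :: "complex ^ ('a::finite \<times> 'b::finite) ^ ('a \<times> 'b)"
  shows "linear (\<lambda>\<sigma>. U ** tensor_mat \<sigma> B ** mat_adjoint U)"
  by (rule linearI)
    (simp_all add: vec_eq_iff matrix_matrix_mult_def tensor_mat_def scaleR_conv_of_real[where 'a=complex]
      sum_distrib_left sum_distrib_right sum.distrib ring_distribs mult_ac)

lemma linear_const_on_convex_hull:
  assumes "linear f" and "\<And>x. x \<in> S \<Longrightarrow> f x = c" and "x \<in> convex hull S"
  shows "f x = c"
proof -
  have "convex hull (f ` S) \<subseteq> {c}"
    using assms(2) by (metis convex_hull_singleton hull_mono image_subsetI singletonI)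
  then show ?thesis
    using in_convex_hull_linear_image[OF assms(1,3)] by blast
qed

theorem theorem4:
  fixes eA eB :: "'n::finite \<Rightarrow> complex ^ 'n"
    and b :: "complex ^ 'n"
    and U :: "complex ^ ('n \<times> 'n) ^ ('n \<times> 'n)"
  assumes onbA: "orthonormal_basis eA"
    and onbB: "orthonormal_basis eB"
    and b_unit: "cinner b b = 1"
    and U_unitary: "unitary_mat U"
    and U_action: "\<And>k. U *v tensor_vec (eA k) b = tensor_vec (eA k) (eB k)"
  shows "(\<forall>\<phi>::'n \<Rightarrow> real. (\<forall>k. \<phi> k \<in> {-pi..pi}) \<longrightarrow>
            (let \<psi> = U *v tensor_vec (a_state eA \<phi>) b in
               ptrace_B (outer \<psi> \<psi>) = max_mixed \<and> ptrace_A (outer \<psi> \<psi>) = max_mixed))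
       \<and> (\<forall>\<sigma>. \<sigma> \<in> convex hull {outer (a_state eA \<phi>) (a_state eA \<phi>) | \<phi>. \<forall>k. \<phi> k \<in> {-pi..pi}} \<longrightarrow>
            (let \<rho> = U ** tensor_mat \<sigma> (outer b b) ** mat_adjoint U in
               ptrace_B \<rho> = max_mixed \<and> ptrace_A \<rho> = max_mixed))"
proof -
  define \<psi> where "\<psi> \<phi> = U *v tensor_vec (a_state eA \<phi>) b" for \<phi>
  define G where "G = (\<lambda>\<sigma>. U ** tensor_mat \<sigma> (outer b b) ** mat_adjoint U)"
  define S where "S = {outer (a_state eA \<phi>) (a_state eA \<phi>) | \<phi>. \<forall>k. \<phi> k \<in> {-pi..pi}}"
  have pure: "ptrace_B (outer (\<psi> \<phi>) (\<psi> \<phi>)) = max_mixed \<and> ptrace_A (outer (\<psi> \<phi>) (\<psi> \<phi>)) = max_mixed"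
    for \<phi>
    by (rule schmidt_uniform_marginals[OF onbA onbB unimodular_over_sqrt_mult_cnj])
      (simp only: \<psi>_def a_state_eq_sum tensor_vec_sum_scale matrix_vector_mult_sum_scale U_action)
  have generators: "ptrace_B (G \<sigma>) = max_mixed \<and> ptrace_A (G \<sigma>) = max_mixed" if "\<sigma> \<in> S" for \<sigma>
    using that pure by (auto simp: S_def G_def \<psi>_def tensor_mat_outer conj_outer)
  have linear_G: "linear G"
    unfolding G_def by (rule linear_conj_tensor_mat)
  have mixed: "ptrace_B (G \<sigma>) = max_mixed \<and> ptrace_A (G \<sigma>) = max_mixed"
    if "\<sigma> \<in> convex hull S" for \<sigma>
    using linear_const_on_convex_hull[OF linear_compose[OF linear_G linear_ptrace_B] _ that]
      linear_const_on_convex_hull[OF linear_compose[OF linear_G linear_ptrace_A] _ that] generators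
    by simp
  show ?thesis
    using pure mixed by (simp add: \<psi>_def G_def S_def)
qed

end
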